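(* Let $\Sigma$ be a dilation surface which contains (an embedded copy of) a dilation cylinder of angle at least $\pi$. Then $\Sigma$ does not admit a geodesic triangulation. *)

theory Defs
  imports "HOL-Analysis.Analysis"
begin

definition dilation_map :: "(complex \<Rightarrow> complex) \<Rightarrow> bool" where
  "dilation_map g \<longleftrightarrow> (\<exists>(a::real) b. a > 0 \<and> (\<forall>z. g z = complex_of_real a * z + b))"

definition develops ::
  "('a set \<times> ('a \<Rightarrow> complex)) set \<Rightarrow> 'b topology \<Rightarrow> 'b set \<Rightarrow> ('b \<Rightarrow> 'a) \<Rightarrow> ('b \<Rightarrow> complex) \<Rightarrow> bool"
  where
  "develops A Y D tau f \<longleftrightarrow>
     (\<forall>p\<in>D. \<forall>V phi. (V, phi) \<in> A \<and> tau p \<in> V \<longrightarrow>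
        (\<exists>N g. openin Y N \<and> p \<in> N \<and> dilation_map g \<and>
               (\<forall>q\<in>N \<inter> D. tau q \<in> V \<and> phi (tau q) = g (f q))))"

text \<open>Dilation surface: compact connected Hausdorff space X, finite singular set S,
  an atlas A of charts on X - S with dilation transition maps, and every singular point
  has a punctured neighbourhood dilation-equivalent to a punctured neighbourhood of the
  cone point of a translation surface (cone angle 2k pi, developing map z \<mapsto> z^k).\<close>
definition dilation_surface ::
  "'a topology \<Rightarrow> 'a set \<Rightarrow> ('a set \<times> ('a \<Rightarrow> complex)) set \<Rightarrow> bool" where
  "dilation_surface X S A \<longleftrightarrow>
     compact_space X \<and> Hausdorff_space X \<and> connected_space X \<and>
     finite S \<and> S \<subseteq> topspace X \<and>
     (\<forall>(U, phi)\<in>A. openin X U \<and> U \<inter> S = {} \<and> open (phi ` U) \<and>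
        homeomorphic_map (subtopology X U) (subtopology euclidean (phi ` U)) phi) \<and>
     topspace X - S \<subseteq> \<Union> (fst ` A) \<and>
     (\<forall>(U, phi)\<in>A. develops A X U id phi) \<and>
     (\<forall>s\<in>S. \<exists>U h r (k::nat). openin X U \<and> s \<in> U \<and> U \<inter> S = {s} \<and> r > 0 \<and> k \<ge> 1 \<and>
        homeomorphic_map (subtopology X U) (subtopology euclidean (ball 0 r)) h \<and>
        h s = 0 \<and> develops A X (U - {s}) id (\<lambda>x. (h x) ^ k))"

text \<open>An embedded dilation cylinder of angle theta: the quotient of the strip
  {z. 0 \<le> Im z \<le> theta} (log-coordinates of a sector of angle theta, developing map exp)
  by the translation z \<mapsto> z + L (L > 0, i.e. the dilation w \<mapsto> e^L w),
  embedded into X, with interior in X - S and compatible with the dilation structure.\<close>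
definition has_dilation_cylinder ::
  "'a topology \<Rightarrow> 'a set \<Rightarrow> ('a set \<times> ('a \<Rightarrow> complex)) set \<Rightarrow> real \<Rightarrow> bool" where
  "has_dilation_cylinder X S A theta \<longleftrightarrow> theta > 0 \<and>
     (\<exists>(L::real) (F::complex \<Rightarrow> 'a). L > 0 \<and>
        continuous_map (subtopology euclidean {z. 0 \<le> Im z \<and> Im z \<le> theta}) X F \<and>
        (\<forall>z. 0 \<le> Im z \<and> Im z \<le> theta \<longrightarrow> F (z + complex_of_real L) = F z) \<and>
        (\<forall>z w. 0 \<le> Im z \<and> Im z \<le> theta \<and> 0 \<le> Im w \<and> Im w \<le> theta \<and> F z = F w \<longrightarrow>
               (\<exists>n::int. w = z + of_int n * complex_of_real L)) \<and>
        (\<forall>z. 0 < Im z \<and> Im z < theta \<longrightarrow> F z \<notin> S) \<and>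
        develops A euclidean {z. 0 < Im z \<and> Im z < theta} F exp)"

text \<open>Geodesic triangulation: a finite family of non-degenerate Euclidean triangles
  (vertices a b c, map tau) mapped into X, vertices sent to singular points, all other points
  to regular points, locally isometric up to dilation in charts (so edges are saddle
  connections), injective on interiors, interiors disjoint from everything else, covering X.\<close>
definition geodesic_triangulation ::
  "'a topology \<Rightarrow> 'a set \<Rightarrow> ('a set \<times> ('a \<Rightarrow> complex)) set \<Rightarrow> bool" where
  "geodesic_triangulation X S A \<longleftrightarrow>
     (\<exists>T :: (complex \<times> complex \<times> complex \<times> (complex \<Rightarrow> 'a)) set.
        finite T \<and>
        (\<forall>(a, b, c, tau)\<in>T.
           interior (convex hull {a, b, c}) \<noteq> {} \<and>
           continuous_map (subtopology euclidean (convex hull {a, b, c})) X tau \<and>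
           inj_on tau (interior (convex hull {a, b, c})) \<and>
           tau a \<in> S \<and> tau b \<in> S \<and> tau c \<in> S \<and>
           (\<forall>z \<in> convex hull {a, b, c} - {a, b, c}. tau z \<notin> S) \<and>
           develops A euclidean (convex hull {a, b, c} - {a, b, c}) tau id \<and>
           tau ` interior (convex hull {a, b, c}) \<inter> tau ` frontier (convex hull {a, b, c}) = {}) \<and>
        (\<forall>(a, b, c, tau)\<in>T. \<forall>(a', b', c', tau')\<in>T. (a, b, c, tau) \<noteq> (a', b', c', tau') \<longrightarrow>
           tau ` interior (convex hull {a, b, c}) \<inter> tau' ` (convex hull {a', b', c'}) = {}) \<and>
        (\<Union>(a, b, c, tau)\<in>T. tau ` (convex hull {a, b, c})) = topspace X)"

end

theory Submission
  imports Defs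
begin

text \<open>
  Let z0 be the point i theta/2 on the midline of the strip that develops the cylinder, and
  suppose F z0 lies in a triangle of a geodesic triangulation, say F z0 = tau w0. Some vertex v of
  the triangle lies in the closed half-plane through w0 facing the direction exp z0. Since theta is
  at least pi, the straight segment starting at exp z0 in that direction lifts through exp to a path
  that stays in the open strip, since its argument changes by less than pi/2. In every chart this
  lifted ray and the segment from w0 to v are affine in the parameter, and after matching their
  speeds they agree near the start; a continuation argument along [0, 1] shows that they agree up to
  the end. Then the singular point tau v lies inside the cylinder, which contains no singular point.
\<close>

lemma unit_interval_continuation:
  fixes P :: "real \<Rightarrow> bool"
  assumes start: "r > 0" "\<And>s. s \<in> {0..1} \<Longrightarrow> s < r \<Longrightarrow> P s"
    and P_closed: "closed {s \<in> {0..1}. P s}"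
    and dichotomy: "\<And>s. s \<in> {0..1} \<Longrightarrow> P s \<Longrightarrow> \<exists>e>0.
         (\<forall>s'\<in>{0..1}. \<bar>s' - s\<bar> < e \<longrightarrow> P s') \<or> (\<forall>s'\<in>{0..1}. \<bar>s' - s\<bar> < e \<longrightarrow> P s' \<longrightarrow> s' = s)"
    and "s \<in> {0..1}"
  shows "P s"
proof (rule ccontr)
  define M where "M = {s \<in> {0..1}. \<not> P s}"
  assume "\<not> P s"
  with \<open>s \<in> {0..1}\<close> have "M \<noteq> {}" by (auto simp: M_def)
  define s1 where "s1 = Inf M"
  have s1_le: "s1 \<le> m" if "m \<in> M" for m
    using that unfolding s1_def by (intro cInf_lower) (auto simp: M_def bdd_below_def)
  have r_le: "r \<le> s1"
    unfolding s1_def using \<open>M \<noteq> {}\<close> start(2) by (intro cInf_greatest) (force simp: M_def)+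
  have "s1 \<le> 1" using \<open>M \<noteq> {}\<close> s1_le by (force simp: M_def)
  have below: "P t" if "t \<in> {0..<s1}" for t
    using that s1_le \<open>s1 \<le> 1\<close> by (force simp: M_def)
  have "{0..<s1} \<subseteq> {s \<in> {0..1}. P s}"
    using below \<open>s1 \<le> 1\<close> by auto
  then have "closure {0..<s1} \<subseteq> {s \<in> {0..1}. P s}"
    by (rule closure_minimal[OF _ P_closed])
  then have "P s1" using r_le start(1) by (simp add: subset_iff)
  moreover have "s1 \<in> {0..1}" using r_le start(1) \<open>s1 \<le> 1\<close> by simp
  ultimately obtain e where "e > 0" and e: "(\<forall>s'\<in>{0..1}. \<bar>s' - s1\<bar> < e \<longrightarrow> P s') \<or>
      (\<forall>s'\<in>{0..1}. \<bar>s' - s1\<bar> < e \<longrightarrow> P s' \<longrightarrow> s' = s1)"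
    using dichotomy by blast
  from e show False
  proof
    assume "\<forall>s'\<in>{0..1}. \<bar>s' - s1\<bar> < e \<longrightarrow> P s'"
    then have "s1 + e \<le> m" if "m \<in> M" for m
      using that s1_le[OF that] by (force simp: M_def)
    then have "s1 + e \<le> s1"
      unfolding s1_def using \<open>M \<noteq> {}\<close> by (intro cInf_greatest) auto
    with \<open>e > 0\<close> show False by simp
  next
    assume isolated: "\<forall>s'\<in>{0..1}. \<bar>s' - s1\<bar> < e \<longrightarrow> P s' \<longrightarrow> s' = s1"
    define t where "t = s1 - min e s1 / 2"
    have "t \<in> {0..<s1}" "\<bar>t - s1\<bar> < e"
      using \<open>e > 0\<close> r_le start(1) by (auto simp: t_def)
    with isolated below \<open>s1 \<le> 1\<close> show False by force
  qed
qed

lemma affine_zero_set_dichotomy: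
  fixes c d :: complex
  assumes "c + of_real s * d = 0"
  shows "(\<forall>t. c + of_real t * d = 0) \<or> (\<forall>t. c + of_real t * d = 0 \<longrightarrow> t = s)"
proof (cases "d = 0")
  case True
  then show ?thesis using assms by simp
next
  case False
  have "t = s" if "c + of_real t * d = 0" for t
  proof -
    have "of_real (t - s) * d = (c + of_real t * d) - (c + of_real s * d)"
      by (simp add: algebra_simps)
    with that assms False show ?thesis by simp
  qed
  then show ?thesis by blast
qed

definition chart_affine_path :: "('a set \<times> ('a \<Rightarrow> complex)) set \<Rightarrow> (real \<Rightarrow> 'a) \<Rightarrow> bool" where
  "chart_affine_path A p \<longleftrightarrow> (\<forall>s\<in>{0..1}. \<forall>V \<phi>. (V, \<phi>) \<in> A \<and> p s \<in> V \<longrightarrow>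
     (\<exists>e>0. \<exists>c d. \<forall>s'\<in>{0..1}. \<bar>s' - s\<bar> < e \<longrightarrow> p s' \<in> V \<and> \<phi> (p s') = c + of_real s' * d))"

lemma chart_affine_pathE:
  assumes "chart_affine_path A p" "s \<in> {0..1}" "(V, \<phi>) \<in> A" "p s \<in> V"
  obtains e c d where "e > 0" "\<And>s'. s' \<in> {0..1} \<Longrightarrow> \<bar>s' - s\<bar> < e \<Longrightarrow> p s' \<in> V \<and> \<phi> (p s') = c + of_real s' * d"
  using assms unfolding chart_affine_path_def by blast

lemma chart_affine_paths_agree:
  assumes X: "Hausdorff_space X" and p: "pathin X p" and q: "pathin X q"
    and inj: "\<And>V \<phi>. (V, \<phi>) \<in> A \<Longrightarrow> inj_on \<phi> V"
    and p_charted: "\<And>s. s \<in> {0..1} \<Longrightarrow> \<exists>V \<phi>. (V, \<phi>) \<in> A \<and> p s \<in> V"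
    and p_affine: "chart_affine_path A p" and q_affine: "chart_affine_path A q"
    and start: "r > 0" "\<And>s. s \<in> {0..1} \<Longrightarrow> s < r \<Longrightarrow> p s = q s"
    and s: "s \<in> {0..1}"
  shows "p s = q s"
proof (rule unit_interval_continuation[where P = "\<lambda>s. p s = q s"])
  have "closedin (top_of_set {0..1}) {s \<in> {0..1}. p s = q s}"
    using closedin_continuous_maps_eq[OF X p[unfolded pathin_def] q[unfolded pathin_def]] by simp
  then show "closed {s \<in> {0..1}. p s = q s}"
    by (simp add: closedin_closed_eq)
next
  fix s :: real
  assume s: "s \<in> {0..1}" and "p s = q s"
  obtain V \<phi> where V: "(V, \<phi>) \<in> A" "p s \<in> V" using p_charted[OF s] by blast
  obtain e1 c1 d1 where "e1 > 0"
    and e1: "\<And>s'. s' \<in> {0..1} \<Longrightarrow> \<bar>s' - s\<bar> < e1 \<Longrightarrow> p s' \<in> V \<and> \<phi> (p s') = c1 + of_real s' * d1"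
    using chart_affine_pathE[OF p_affine s V] by blast
  obtain e2 c2 d2 where "e2 > 0"
    and e2: "\<And>s'. s' \<in> {0..1} \<Longrightarrow> \<bar>s' - s\<bar> < e2 \<Longrightarrow> q s' \<in> V \<and> \<phi> (q s') = c2 + of_real s' * d2"
    using chart_affine_pathE[OF q_affine s V(1)] V(2) \<open>p s = q s\<close> by auto
  have agree_iff: "p s' = q s' \<longleftrightarrow> (c1 - c2) + of_real s' * (d1 - d2) = 0"
    if "s' \<in> {0..1}" "\<bar>s' - s\<bar> < min e1 e2" for s'
    using e1[OF that(1)] e2[OF that(1)] that(2) inj_onD[OF inj[OF V(1)]]
    by (auto simp: algebra_simps)
  have "(c1 - c2) + of_real s * (d1 - d2) = 0"
    using agree_iff[OF s] \<open>p s = q s\<close> \<open>e1 > 0\<close> \<open>e2 > 0\<close> by simp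
  then have "(\<forall>s'\<in>{0..1}. \<bar>s' - s\<bar> < min e1 e2 \<longrightarrow> p s' = q s') \<or>
        (\<forall>s'\<in>{0..1}. \<bar>s' - s\<bar> < min e1 e2 \<longrightarrow> p s' = q s' \<longrightarrow> s' = s)"
    using affine_zero_set_dichotomy agree_iff by blast
  then show "\<exists>e>0. (\<forall>s'\<in>{0..1}. \<bar>s' - s\<bar> < e \<longrightarrow> p s' = q s') \<or>
      (\<forall>s'\<in>{0..1}. \<bar>s' - s\<bar> < e \<longrightarrow> p s' = q s' \<longrightarrow> s' = s)"
    using \<open>e1 > 0\<close> \<open>e2 > 0\<close> by (intro exI[of _ "min e1 e2"]) simp
qed (use start s in auto)

lemma developsE:
  assumes "develops A Y D \<tau> f" "p \<in> D" "(V, \<phi>) \<in> A" "\<tau> p \<in> V"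
  obtains N a b where "openin Y N" "p \<in> N" "a > 0"
    "\<And>q. q \<in> N \<inter> D \<Longrightarrow> \<tau> q \<in> V \<and> \<phi> (\<tau> q) = of_real a * f q + b"
proof -
  obtain N g where N: "openin Y N" "p \<in> N" "dilation_map g"
    and dev: "\<forall>q\<in>N \<inter> D. \<tau> q \<in> V \<and> \<phi> (\<tau> q) = g (f q)"
    using assms(1)[unfolded develops_def, rule_format, OF assms(2) conjI[OF assms(3,4)]] by blast
  obtain a b where "a > 0" and g: "\<And>z. g z = of_real a * z + b"
    using N(3) unfolding dilation_map_def by blast
  show thesis
  proof (rule that[OF N(1,2) \<open>a > 0\<close>])
    fix q assume "q \<in> N \<inter> D"
    then show "\<tau> q \<in> V \<and> \<phi> (\<tau> q) = of_real a * f q + b" using dev g by metis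
  qed
qed

lemma path_locally_in:
  fixes \<gamma> :: "real \<Rightarrow> 'a::metric_space"
  assumes "path \<gamma>" "path_image \<gamma> \<subseteq> E" "openin (top_of_set E) D" "open N"
    and "s \<in> {0..1}" "\<gamma> s \<in> D \<inter> N"
  obtains e where "e > 0" "\<And>s'. s' \<in> {0..1} \<Longrightarrow> \<bar>s' - s\<bar> < e \<Longrightarrow> \<gamma> s' \<in> D \<inter> N"
proof -
  obtain U where "open U" and D: "D = E \<inter> U" using assms(3) by (auto simp: openin_open)
  have "\<gamma> s \<in> U \<inter> N" using assms(6) D by blast
  then obtain \<epsilon> where "\<epsilon> > 0" and \<epsilon>: "ball (\<gamma> s) \<epsilon> \<subseteq> U \<inter> N"
    using open_contains_ball_eq[OF open_Int[OF \<open>open U\<close> \<open>open N\<close>]] by blast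
  obtain e where "e > 0" and e: "\<And>s'. s' \<in> {0..1} \<Longrightarrow> dist s' s < e \<Longrightarrow> dist (\<gamma> s') (\<gamma> s) < \<epsilon>"
    using assms(1,5) \<open>\<epsilon> > 0\<close> unfolding path_def continuous_on_iff by blast
  show thesis
  proof (rule that[OF \<open>e > 0\<close>])
    fix s' assume s': "s' \<in> {0..1}" "\<bar>s' - s\<bar> < e"
    then have "dist (\<gamma> s') (\<gamma> s) < \<epsilon>" using e by (simp add: dist_real_def)
    then have "\<gamma> s' \<in> ball (\<gamma> s) \<epsilon>" by (simp add: dist_commute)
    then have "\<gamma> s' \<in> U \<inter> N" using \<epsilon> by blast
    moreover have "\<gamma> s' \<in> E" using assms(2) s'(1) by (auto simp: path_image_def)
    ultimately show "\<gamma> s' \<in> D \<inter> N" using D by blast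
  qed
qed

lemma develops_chart_affine_path:
  fixes \<tau> :: "complex \<Rightarrow> 'a" and \<gamma> :: "real \<Rightarrow> complex"
  assumes dev: "develops A euclidean D \<tau> f"
    and D: "openin (top_of_set E) D" and \<gamma>: "path \<gamma>" "path_image \<gamma> \<subseteq> E"
    and affine: "\<And>s. s \<in> {0..1} \<Longrightarrow> f (\<gamma> s) = c + of_real s * d"
    and off_D: "\<And>s. s \<in> {0..1} \<Longrightarrow> \<gamma> s \<notin> D \<Longrightarrow> \<tau> (\<gamma> s) \<in> S"
    and charts: "\<And>V \<phi>. (V, \<phi>) \<in> A \<Longrightarrow> V \<inter> S = {}"
  shows "chart_affine_path A (\<tau> \<circ> \<gamma>)"
  unfolding chart_affine_path_def
proof (intro ballI allI impI, elim conjE)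
  fix s V \<phi>
  assume s: "s \<in> {0..1}" and V: "(V, \<phi>) \<in> A" "(\<tau> \<circ> \<gamma>) s \<in> V"
  have \<gamma>s: "\<gamma> s \<in> D" using off_D charts s V by fastforce
  have \<tau>\<gamma>s: "\<tau> (\<gamma> s) \<in> V" using V(2) by simp
  obtain N a b where N_open: "openin euclidean N" and "\<gamma> s \<in> N"
    and N: "\<And>q. q \<in> N \<inter> D \<Longrightarrow> \<tau> q \<in> V \<and> \<phi> (\<tau> q) = of_real a * f q + b"
    by (rule developsE[OF dev \<gamma>s V(1) \<tau>\<gamma>s]) blast
  have "open N" using N_open by simp
  have "\<gamma> s \<in> D \<inter> N" using \<gamma>s \<open>\<gamma> s \<in> N\<close> by blast
  then obtain e where "e > 0" and e: "\<And>s'. s' \<in> {0..1} \<Longrightarrow> \<bar>s' - s\<bar> < e \<Longrightarrow> \<gamma> s' \<in> D \<inter> N"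
    by (rule path_locally_in[OF \<gamma> D \<open>open N\<close> s]) blast
  have near: "(\<tau> \<circ> \<gamma>) s' \<in> V \<and> \<phi> ((\<tau> \<circ> \<gamma>) s') = (of_real a * c + b) + of_real s' * (of_real a * d)"
    if "s' \<in> {0..1}" "\<bar>s' - s\<bar> < e" for s'
  proof -
    have "\<gamma> s' \<in> N \<inter> D" using e[OF that] by blast
    then have "\<tau> (\<gamma> s') \<in> V" and "\<phi> (\<tau> (\<gamma> s')) = of_real a * (c + of_real s' * d) + b"
      using N affine[OF that(1)] by auto
    then show ?thesis by (simp add: algebra_simps)
  qed
  show "\<exists>e>0. \<exists>c d. \<forall>s'\<in>{0..1}. \<bar>s' - s\<bar> < e \<longrightarrow>
      (\<tau> \<circ> \<gamma>) s' \<in> V \<and> \<phi> ((\<tau> \<circ> \<gamma>) s') = c + of_real s' * d"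
    using \<open>e > 0\<close> near by blast
qed

lemma convex_hull_linear_le_point:
  fixes l :: "'a::real_vector \<Rightarrow> real"
  assumes "linear l" "x \<in> convex hull S"
  shows "\<exists>v\<in>S. l x \<le> l v"
proof (rule ccontr)
  assume "\<not> ?thesis"
  then have "S \<subseteq> l -` {..<l x}" by (auto simp: not_le)
  moreover have "convex (l -` {..<l x})" by (rule convex_linear_vimage[OF assms(1)]) simp
  ultimately have "convex hull S \<subseteq> l -` {..<l x}" by (rule hull_minimal)
  with assms(2) show False by auto
qed

lemma convex_hull_vertex_in_half_plane:
  fixes u w :: complex
  assumes "w \<in> convex hull P"
  obtains v where "v \<in> P" "0 \<le> Re ((v - w) / u)"
proof -
  have "linear (\<lambda>x. Re (x / u))"
    by (intro bounded_linear.linear bounded_linear_compose[OF bounded_linear_Re] bounded_linear_divide)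
  then obtain v where "v \<in> P" "Re (w / u) \<le> Re (v / u)"
    using convex_hull_linear_le_point assms by blast
  then show thesis using that by (simp add: diff_divide_distrib)
qed

lemma openin_convex_hull_diff_finite:
  fixes P :: "'a::real_normed_vector set"
  shows "finite P \<Longrightarrow> openin (top_of_set (convex hull P)) (convex hull P - P)"
  by (intro openin_diff closed_subset) (auto simp: hull_subset finite_imp_closed)

lemma exp_ray_lift:
  fixes z0 D :: complex
  assumes "0 \<le> Re (D / exp z0)"
  obtains \<gamma> where "path \<gamma>" "\<gamma> 0 = z0"
    "\<And>s. 0 \<le> s \<Longrightarrow> exp (\<gamma> s) = exp z0 + of_real s * D"
    "\<And>s. 0 \<le> s \<Longrightarrow> \<bar>Im (\<gamma> s) - Im z0\<bar> < pi / 2"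
proof
  define c where "c = D / exp z0"
  define q where "q s = 1 + of_real s * c" for s :: real
  have Re_q: "0 < Re (q s)" if "0 \<le> s" for s
    using assms that by (simp add: q_def c_def[symmetric] add_pos_nonneg)
  have "q s \<notin> \<real>\<^sub>\<le>\<^sub>0" if "s \<in> {0..1}" for s
    using Re_q[of s] that by (auto simp: complex_nonpos_Reals_iff)
  then show "path (\<lambda>s. z0 + Ln (q s))"
    unfolding path_def q_def by (intro continuous_intros) auto
  show "z0 + Ln (q 0) = z0" by (simp add: q_def)
  fix s :: real assume "0 \<le> s"
  then have "q s \<noteq> 0" using Re_q by force
  then have "exp (z0 + Ln (q s)) = exp z0 * q s" by (simp add: exp_add)
  also have "\<dots> = exp z0 + of_real s * D" by (simp add: q_def c_def distrib_left)
  finally show "exp (z0 + Ln (q s)) = exp z0 + of_real s * D" .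
  have "Im (z0 + Ln (q s)) - Im z0 = Im (Ln (q s))" by simp
  then show "\<bar>Im (z0 + Ln (q s)) - Im z0\<bar> < pi / 2"
    using Re_Ln_pos_lt_imp[OF Re_q[OF \<open>0 \<le> s\<close>]] by simp
qed

lemma exp_ray_lift_in_strip:
  fixes z0 D :: complex
  assumes "pi / 2 \<le> Im z0" "Im z0 + pi / 2 \<le> theta" "0 \<le> Re (D / exp z0)"
  obtains \<gamma> where "path \<gamma>" "\<gamma> 0 = z0" "path_image \<gamma> \<subseteq> {z. 0 < Im z \<and> Im z < theta}"
    "\<And>s. s \<in> {0..1} \<Longrightarrow> exp (\<gamma> s) = exp z0 + of_real s * D"
proof -
  obtain \<gamma> where \<gamma>: "path \<gamma>" "\<gamma> 0 = z0"
    "\<And>s. 0 \<le> s \<Longrightarrow> exp (\<gamma> s) = exp z0 + of_real s * D"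
    "\<And>s. 0 \<le> s \<Longrightarrow> \<bar>Im (\<gamma> s) - Im z0\<bar> < pi / 2"
    by (rule exp_ray_lift[OF assms(3)]) blast
  have "0 < Im (\<gamma> s) \<and> Im (\<gamma> s) < theta" if "s \<in> {0..1}" for s
    using \<gamma>(4)[of s] that assms(1,2) unfolding abs_less_iff by auto
  then have "path_image \<gamma> \<subseteq> {z. 0 < Im z \<and> Im z < theta}"
    unfolding path_image_def by blast
  with \<gamma> show thesis using that by simp
qed

lemma pathin_compose_path:
  assumes "path \<gamma>" "path_image \<gamma> \<subseteq> E" "continuous_map (top_of_set E) X \<tau>"
  shows "pathin X (\<tau> \<circ> \<gamma>)"
proof -
  have "continuous_map (top_of_set {0..1}) (top_of_set E) \<gamma>"
    using assms(1,2) by (auto simp: path_def path_image_def)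
  then show ?thesis unfolding pathin_def using assms(3) by (rule continuous_map_compose)
qed

lemma dilation_surface_Hausdorff: "dilation_surface X S A \<Longrightarrow> Hausdorff_space X"
  by (simp add: dilation_surface_def)

lemma dilation_surface_chart:
  assumes "dilation_surface X S A" "(V, \<phi>) \<in> A"
  shows "inj_on \<phi> V" "V \<inter> S = {}"
proof -
  have "\<forall>(U, \<psi>)\<in>A. openin X U \<and> U \<inter> S = {} \<and> open (\<psi> ` U) \<and>
      homeomorphic_map (subtopology X U) (top_of_set (\<psi> ` U)) \<psi>"
    using assms(1) by (simp add: dilation_surface_def)
  then have "openin X V" "V \<inter> S = {}" "homeomorphic_map (subtopology X V) (top_of_set (\<phi> ` V)) \<phi>"
    using assms(2) by auto
  then show "inj_on \<phi> V" "V \<inter> S = {}"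
    by (auto simp: homeomorphic_map_def openin_subset Int_absorb1)
qed

lemma dilation_surface_chart_at:
  assumes "dilation_surface X S A" "p \<in> topspace X" "p \<notin> S"
  obtains V \<phi> where "(V, \<phi>) \<in> A" "p \<in> V"
proof -
  have "topspace X - S \<subseteq> \<Union> (fst ` A)"
    using assms(1) by (simp add: dilation_surface_def)
  then obtain C where "C \<in> A" "p \<in> fst C" using assms(2,3) by blast
  then show thesis using that[of "fst C" "snd C"] by simp
qed

lemma has_dilation_cylinderE:
  assumes "has_dilation_cylinder X S A theta"
  obtains F where "continuous_map (top_of_set {z. 0 \<le> Im z \<and> Im z \<le> theta}) X F"
    "\<And>z. 0 < Im z \<Longrightarrow> Im z < theta \<Longrightarrow> F z \<notin> S"
    "develops A euclidean {z. 0 < Im z \<and> Im z < theta} F exp"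
  using assms unfolding has_dilation_cylinder_def by (elim conjE exE) (rule that; simp)

lemma geodesic_triangulation_covering_triangle:
  assumes "geodesic_triangulation X S A" "p \<in> topspace X"
  obtains a b c \<tau> where "p \<in> \<tau> ` (convex hull {a, b, c})"
    "continuous_map (top_of_set (convex hull {a, b, c})) X \<tau>" "\<tau> ` {a, b, c} \<subseteq> S"
    "develops A euclidean (convex hull {a, b, c} - {a, b, c}) \<tau> id"
proof -
  obtain T where T: "\<forall>(a, b, c, \<tau>)\<in>T.
           interior (convex hull {a, b, c}) \<noteq> {} \<and>
           continuous_map (subtopology euclidean (convex hull {a, b, c})) X \<tau> \<and>
           inj_on \<tau> (interior (convex hull {a, b, c})) \<and>
           \<tau> a \<in> S \<and> \<tau> b \<in> S \<and> \<tau> c \<in> S \<and>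
           (\<forall>z \<in> convex hull {a, b, c} - {a, b, c}. \<tau> z \<notin> S) \<and>
           develops A euclidean (convex hull {a, b, c} - {a, b, c}) \<tau> id \<and>
           \<tau> ` interior (convex hull {a, b, c}) \<inter> \<tau> ` frontier (convex hull {a, b, c}) = {}"
    and cover: "(\<Union>(a, b, c, \<tau>)\<in>T. \<tau> ` (convex hull {a, b, c})) = topspace X"
    using assms(1) unfolding geodesic_triangulation_def by (elim exE conjE) (rule that)
  obtain t where "t \<in> T" "p \<in> (case t of (a, b, c, \<tau>) \<Rightarrow> \<tau> ` (convex hull {a, b, c}))"
    using cover assms(2) by blast
  moreover obtain a b c \<tau> where "t = (a, b, c, \<tau>)" by (cases t) blast
  ultimately have "(a, b, c, \<tau>) \<in> T" "p \<in> \<tau> ` (convex hull {a, b, c})" by simp_all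
  then show thesis
    using that bspec[OF T \<open>(a, b, c, \<tau>) \<in> T\<close>] by simp
qed

lemma developed_paths_agree:
  fixes \<tau>1 \<tau>2 :: "complex \<Rightarrow> 'a" and \<gamma>1 \<gamma>2 :: "real \<Rightarrow> complex"
  assumes surf: "dilation_surface X S A"
    and \<tau>1: "continuous_map (top_of_set D1) X \<tau>1" "develops A euclidean D1 \<tau>1 f1" "\<tau>1 ` D1 \<inter> S = {}"
    and \<gamma>1: "path \<gamma>1" "path_image \<gamma>1 \<subseteq> D1" "\<And>s. s \<in> {0..1} \<Longrightarrow> f1 (\<gamma>1 s) = c1 + of_real s * d1"
    and \<tau>2: "continuous_map (top_of_set E2) X \<tau>2" "develops A euclidean D2 \<tau>2 f2"
      "openin (top_of_set E2) D2" "\<And>z. z \<in> E2 - D2 \<Longrightarrow> \<tau>2 z \<in> S"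
    and \<gamma>2: "path \<gamma>2" "path_image \<gamma>2 \<subseteq> E2" "\<gamma>2 0 \<in> D2"
      "\<And>s. s \<in> {0..1} \<Longrightarrow> f2 (\<gamma>2 s) = c2 + of_real s * d2"
    and V: "(V, \<phi>) \<in> A"
    and N1: "openin euclidean N1" "\<gamma>1 0 \<in> N1" "\<And>q. q \<in> N1 \<inter> D1 \<Longrightarrow> \<tau>1 q \<in> V \<and> \<phi> (\<tau>1 q) = of_real a1 * f1 q + b1"
    and N2: "openin euclidean N2" "\<gamma>2 0 \<in> N2" "\<And>q. q \<in> N2 \<inter> D2 \<Longrightarrow> \<tau>2 q \<in> V \<and> \<phi> (\<tau>2 q) = of_real a2 * f2 q + b2"
    and same_start: "of_real a1 * c1 + b1 = of_real a2 * c2 + b2"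
    and same_velocity: "of_real a1 * d1 = of_real a2 * d2"
  shows "\<tau>1 (\<gamma>1 1) = \<tau>2 (\<gamma>2 1)"
proof -
  have \<gamma>1_in: "\<gamma>1 s \<in> D1" if "s \<in> {0..1}" for s using \<gamma>1(2) that by (auto simp: path_image_def)
  have \<gamma>2_in: "\<gamma>2 s \<in> E2" if "s \<in> {0..1}" for s using \<gamma>2(2) that by (auto simp: path_image_def)
  have p: "pathin X (\<tau>1 \<circ> \<gamma>1)" by (rule pathin_compose_path[OF \<gamma>1(1,2) \<tau>1(1)])
  have q: "pathin X (\<tau>2 \<circ> \<gamma>2)" by (rule pathin_compose_path[OF \<gamma>2(1,2) \<tau>2(1)])
  have p_affine: "chart_affine_path A (\<tau>1 \<circ> \<gamma>1)"
    using develops_chart_affine_path[OF \<tau>1(2) openin_subtopology_self \<gamma>1(1,2) \<gamma>1(3)] \<gamma>1_in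
      dilation_surface_chart(2)[OF surf] by blast
  have q_affine: "chart_affine_path A (\<tau>2 \<circ> \<gamma>2)"
    using develops_chart_affine_path[OF \<tau>2(2,3) \<gamma>2(1,2) \<gamma>2(4)] \<gamma>2_in \<tau>2(4)
      dilation_surface_chart(2)[OF surf] by blast
  have p_charted: "\<exists>V \<phi>. (V, \<phi>) \<in> A \<and> (\<tau>1 \<circ> \<gamma>1) s \<in> V" if "s \<in> {0..1}" for s
  proof -
    have "(\<tau>1 \<circ> \<gamma>1) s \<in> topspace X" using p that by (auto simp: pathin_def continuous_map_def)
    moreover have "(\<tau>1 \<circ> \<gamma>1) s \<notin> S" using \<tau>1(3) \<gamma>1_in[OF that] by auto
    ultimately show ?thesis using dilation_surface_chart_at[OF surf] by metis
  qed
  have "(0::real) \<in> {0..1}" "\<gamma>1 0 \<in> D1 \<inter> N1" using \<gamma>1_in N1(2) by auto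
  then obtain r1 where "r1 > 0" and r1: "\<And>s. s \<in> {0..1} \<Longrightarrow> \<bar>s\<bar> < r1 \<Longrightarrow> \<gamma>1 s \<in> D1 \<inter> N1"
    by (rule path_locally_in[OF \<gamma>1(1,2) openin_subtopology_self N1(1)[simplified]]) auto
  have "(0::real) \<in> {0..1}" "\<gamma>2 0 \<in> D2 \<inter> N2" using \<gamma>2(3) N2(2) by auto
  then obtain r2 where "r2 > 0" and r2: "\<And>s. s \<in> {0..1} \<Longrightarrow> \<bar>s\<bar> < r2 \<Longrightarrow> \<gamma>2 s \<in> D2 \<inter> N2"
    by (rule path_locally_in[OF \<gamma>2(1,2) \<tau>2(3) N2(1)[simplified]]) auto
  have start: "(\<tau>1 \<circ> \<gamma>1) s = (\<tau>2 \<circ> \<gamma>2) s" if "s \<in> {0..1}" "s < min r1 r2" for s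
  proof -
    have p_chart: "\<tau>1 (\<gamma>1 s) \<in> V" "\<phi> (\<tau>1 (\<gamma>1 s)) = of_real a1 * (c1 + of_real s * d1) + b1"
      using N1(3) r1[OF that(1)] \<gamma>1(3)[OF that(1)] that by auto
    have q_chart: "\<tau>2 (\<gamma>2 s) \<in> V" "\<phi> (\<tau>2 (\<gamma>2 s)) = of_real a2 * (c2 + of_real s * d2) + b2"
      using N2(3) r2[OF that(1)] \<gamma>2(4)[OF that(1)] that by auto
    have "of_real a1 * (c1 + of_real s * d1) + b1 = (of_real a1 * c1 + b1) + of_real s * (of_real a1 * d1)"
      by (simp add: algebra_simps)
    also have "\<dots> = (of_real a2 * c2 + b2) + of_real s * (of_real a2 * d2)"
      using same_start same_velocity by simp
    also have "\<dots> = of_real a2 * (c2 + of_real s * d2) + b2"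
      by (simp add: algebra_simps)
    finally show ?thesis using p_chart q_chart inj_onD[OF dilation_surface_chart(1)[OF surf V]] by simp
  qed
  have "(\<tau>1 \<circ> \<gamma>1) 1 = (\<tau>2 \<circ> \<gamma>2) 1"
    by (rule chart_affine_paths_agree[where r = "min r1 r2", OF dilation_surface_Hausdorff[OF surf] p q
          dilation_surface_chart(1)[OF surf] p_charted p_affine q_affine _ start])
      (use \<open>r1 > 0\<close> \<open>r2 > 0\<close> in auto)
  then show ?thesis by simp
qed

lemma strip_point_not_in_polygon:
  fixes F \<tau> :: "complex \<Rightarrow> 'a" and P :: "complex set"
  assumes surf: "dilation_surface X S A"
    and z0: "pi / 2 \<le> Im z0" "Im z0 + pi / 2 \<le> theta"
    and F: "continuous_map (top_of_set {z. 0 < Im z \<and> Im z < theta}) X F"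
      "F ` {z. 0 < Im z \<and> Im z < theta} \<inter> S = {}"
      "develops A euclidean {z. 0 < Im z \<and> Im z < theta} F exp"
    and \<tau>: "finite P" "continuous_map (top_of_set (convex hull P)) X \<tau>" "\<tau> ` P \<subseteq> S"
      "develops A euclidean (convex hull P - P) \<tau> id"
  shows "F z0 \<notin> \<tau> ` (convex hull P)"
proof
  define St where "St = {z. 0 < Im z \<and> Im z < theta}"
  assume "F z0 \<in> \<tau> ` (convex hull P)"
  then obtain w0 where w0: "w0 \<in> convex hull P" "\<tau> w0 = F z0" by auto
  have "0 < Im z0" "Im z0 < theta" using z0 pi_gt_zero by linarith+
  then have "z0 \<in> St" by (simp add: St_def)
  then have "F z0 \<in> topspace X" "F z0 \<notin> S"
    using F(1,2) by (auto simp: St_def continuous_map_def)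
  then obtain V \<phi> where V: "(V, \<phi>) \<in> A" "F z0 \<in> V" by (rule dilation_surface_chart_at[OF surf])
  have w0_reg: "w0 \<in> convex hull P - P" using w0 \<tau>(3) \<open>F z0 \<notin> S\<close> by auto
  obtain N1 a1 b1 where N1: "openin euclidean N1" "z0 \<in> N1" "a1 > 0"
    "\<And>q. q \<in> N1 \<inter> St \<Longrightarrow> F q \<in> V \<and> \<phi> (F q) = of_real a1 * exp q + b1"
    by (rule developsE[OF F(3)[folded St_def] \<open>z0 \<in> St\<close> V]) blast
  obtain N2 a2 b2 where N2: "openin euclidean N2" "w0 \<in> N2" "a2 > 0"
    "\<And>q. q \<in> N2 \<inter> (convex hull P - P) \<Longrightarrow> \<tau> q \<in> V \<and> \<phi> (\<tau> q) = of_real a2 * id q + b2"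
    by (rule developsE[OF \<tau>(4) w0_reg V(1)]) (use V(2) w0(2) in auto)
  obtain v where "v \<in> P" and v: "0 \<le> Re ((v - w0) / exp z0)"
    by (rule convex_hull_vertex_in_half_plane[OF w0(1)])
  \<comment> \<open>rescaled so that both paths have the same velocity in the chart V\<close>
  define D where "D = of_real (a2 / a1) * (v - w0)"
  have "0 \<le> Re (D / exp z0)"
  proof -
    define u where "u = (v - w0) / exp z0"
    have "D / exp z0 = of_real (a2 / a1) * u" by (simp add: D_def u_def)
    then have "Re (D / exp z0) = a2 / a1 * Re u" by simp
    then show ?thesis using v N1(3) N2(3) unfolding u_def by simp
  qed
  then obtain \<gamma> where \<gamma>: "path \<gamma>" "\<gamma> 0 = z0" "path_image \<gamma> \<subseteq> St"
    "\<And>s. s \<in> {0..1} \<Longrightarrow> exp (\<gamma> s) = exp z0 + of_real s * D"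
    unfolding St_def by (rule exp_ray_lift_in_strip[OF z0]) blast
  have segment: "id (linepath w0 v s) = w0 + of_real s * (v - w0)" if "s \<in> {0..1}" for s
    by (simp add: linepath_def scaleR_conv_of_real algebra_simps)
  have "path_image (linepath w0 v) \<subseteq> convex hull P"
    using w0(1) \<open>v \<in> P\<close> by (simp add: closed_segment_subset hull_inc)
  moreover have "openin (top_of_set (convex hull P)) (convex hull P - P)"
    using \<tau>(1) by (rule openin_convex_hull_diff_finite)
  moreover have "\<tau> z \<in> S" if "z \<in> convex hull P - (convex hull P - P)" for z
    using that \<tau>(3) by auto
  moreover have "of_real a1 * exp z0 + b1 = of_real a2 * w0 + b2"
    using N1(2,4) N2(2,4) \<open>z0 \<in> St\<close> w0_reg w0(2) by force
  moreover have "of_real a1 * D = of_real a2 * (v - w0)"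
    using N1(3) by (simp add: D_def)
  ultimately have "F (\<gamma> 1) = \<tau> v"
    using developed_paths_agree[OF surf F(1,3,2)[folded St_def] \<gamma>(1,3,4) \<tau>(2,4) _ _ path_linepath _ _
        segment V(1) N1(1) _ N1(4) N2(1) _ N2(4)] w0_reg N1(2) N2(2) \<gamma>(2)
    by (simp add: linepath_0' linepath_1')
  moreover have "\<gamma> 1 \<in> St" using \<gamma>(3) by (auto simp: path_image_def)
  ultimately show False using F(2)[folded St_def] \<open>v \<in> P\<close> \<tau>(3) by blast
qed

theorem mainTheorem3:
  fixes X :: "'a topology" and S :: "'a set" and A :: "('a set \<times> ('a \<Rightarrow> complex)) set"
    and theta :: real
  assumes "dilation_surface X S A"
    and "has_dilation_cylinder X S A theta"
    and "theta \<ge> pi"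
  shows "\<not> geodesic_triangulation X S A"
proof
  assume "geodesic_triangulation X S A"
  obtain F where F: "continuous_map (top_of_set {z. 0 \<le> Im z \<and> Im z \<le> theta}) X F"
    "\<And>z. 0 < Im z \<Longrightarrow> Im z < theta \<Longrightarrow> F z \<notin> S" "develops A euclidean {z. 0 < Im z \<and> Im z < theta} F exp"
    by (rule has_dilation_cylinderE[OF assms(2)]) blast
  define z0 where "z0 = \<i> * of_real (theta / 2)"
  have "0 < theta" using pi_gt_zero assms(3) by linarith
  then have "z0 \<in> {z. 0 \<le> Im z \<and> Im z \<le> theta}" by (simp add: z0_def)
  then have "F z0 \<in> topspace X" using continuous_map_image_subset_topspace[OF F(1)] by auto
  then obtain a b c \<tau> where z0_in: "F z0 \<in> \<tau> ` (convex hull {a, b, c})"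
    and \<tau>: "continuous_map (top_of_set (convex hull {a, b, c})) X \<tau>" "\<tau> ` {a, b, c} \<subseteq> S"
      "develops A euclidean (convex hull {a, b, c} - {a, b, c}) \<tau> id"
    by (rule geodesic_triangulation_covering_triangle[OF \<open>geodesic_triangulation X S A\<close>])
  have "F z0 \<notin> \<tau> ` (convex hull {a, b, c})"
  proof (rule strip_point_not_in_polygon[OF assms(1) _ _ _ _ F(3) _ \<tau>])
    show "continuous_map (top_of_set {z. 0 < Im z \<and> Im z < theta}) X F"
      by (rule continuous_map_from_subtopology_mono[OF F(1)]) auto
    show "F ` {z. 0 < Im z \<and> Im z < theta} \<inter> S = {}" using F(2) by auto
  qed (use assms(3) in \<open>simp_all add: z0_def\<close>)
  with z0_in show False by contradiction
qed

end
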